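(* For all $k\ge1$ and $n\ge0$, $\gamma_k(n)=\frac1k\,b_k(n+1)$.
   Context: Let $G=\{g_1=e,\dots,g_k\}$ be a group of order $k$. A labeled graph on $G$ with $n$ edges has vertex set $G$ and $n$ directed edges labeled $1,\dots,n$, edge $i$ being an ordered pair of vertices (loops and multiple edges allowed); there are $k^{2n}$ such graphs. The degree of a vertex is the number of edges having it as initial or terminal point, a loop counted twice. A graph is balanced if every vertex has even degree; $b_k(n)$ is the number of balanced labeled graphs on $G$ with $n$ edges. A graph has an Eulerian pseudo-path from $e$ to $g_i$ if: all vertices other than $e,g_i$ have even degree; if $g_i=e$ then $\deg e$ is even; if $g_i\ne e$ then $\deg e$ and $\deg g_i$ are odd (no connectivity required). $\gamma_k(n)$ is the number of labeled graphs on $G$ with $n$ edges having an Eulerian pseudo-path from $e$ to some vertex $g_i$, $1\le i\le k$. *)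

theory Defs
  imports Complex_Main "HOL-Algebra.Group" "HOL-Library.FuncSet"
begin

text \<open>Labeled graphs with n edges on vertex set V: edge i (for i in 0..<n, standing for
labels 1..n) is an ordered pair of vertices.\<close>
definition labeled_graphs :: "'a set \<Rightarrow> nat \<Rightarrow> (nat \<Rightarrow> 'a \<times> 'a) set" where
  "labeled_graphs V n = {0..<n} \<rightarrow>\<^sub>E (V \<times> V)"

definition gdeg :: "nat \<Rightarrow> (nat \<Rightarrow> 'a \<times> 'a) \<Rightarrow> 'a \<Rightarrow> nat" where
  "gdeg n g v = (\<Sum>i<n. (if fst (g i) = v then 1 else 0) + (if snd (g i) = v then 1 else 0))"

definition balanced :: "'a set \<Rightarrow> nat \<Rightarrow> (nat \<Rightarrow> 'a \<times> 'a) \<Rightarrow> bool" where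
  "balanced V n g \<longleftrightarrow> (\<forall>v\<in>V. even (gdeg n g v))"

definition eulerian_pseudo_path ::
  "'a set \<Rightarrow> nat \<Rightarrow> (nat \<Rightarrow> 'a \<times> 'a) \<Rightarrow> 'a \<Rightarrow> 'a \<Rightarrow> bool" where
  "eulerian_pseudo_path V n g e x \<longleftrightarrow>
     (\<forall>v\<in>V. v \<noteq> e \<and> v \<noteq> x \<longrightarrow> even (gdeg n g v)) \<and>
     (x = e \<longrightarrow> even (gdeg n g e)) \<and>
     (x \<noteq> e \<longrightarrow> odd (gdeg n g e) \<and> odd (gdeg n g x))"

definition b_count :: "('a, 'b) monoid_scheme \<Rightarrow> nat \<Rightarrow> nat" where
  "b_count G n = card {g \<in> labeled_graphs (carrier G) n. balanced (carrier G) n g}"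

definition gamma_count :: "('a, 'b) monoid_scheme \<Rightarrow> nat \<Rightarrow> nat" where
  "gamma_count G n = card {g \<in> labeled_graphs (carrier G) n.
      \<exists>x\<in>carrier G. eulerian_pseudo_path (carrier G) n g \<one>\<^bsub>G\<^esub> x}"

end

theory Submission
  imports Defs
begin

text \<open>Removing the last edge (u, v) of a balanced graph with n + 1 edges leaves a graph with an
  Eulerian pseudo-path from u to v, and v is determined by that graph. So the balanced graphs whose
  last edge starts at the identity correspond exactly to the graphs counted by gamma_k(n). Left
  translation by a group element preserves balance and carries the start of the last edge from the
  identity to any prescribed vertex, so all k fibres over that start vertex have the same size.\<close>

lemma labeled_graphs_iff:
  "g \<in> labeled_graphs V m \<longleftrightarrow> (\<forall>i<m. g i \<in> V \<times> V) \<and> (\<forall>i\<ge>m. g i = undefined)"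
  unfolding labeled_graphs_def PiE_def extensional_def Pi_def by auto

lemma restrict_labeled_graph:
  "h \<in> labeled_graphs V (Suc n) \<Longrightarrow> restrict h {0..<n} \<in> labeled_graphs V n"
  unfolding labeled_graphs_iff by auto

lemma extend_labeled_graph:
  "g \<in> labeled_graphs V n \<Longrightarrow> p \<in> V \<times> V \<Longrightarrow> g(n := p) \<in> labeled_graphs V (Suc n)"
  unfolding labeled_graphs_iff by auto

lemma gdeg_cong: "(\<And>i. i < m \<Longrightarrow> g i = g' i) \<Longrightarrow> gdeg m g v = gdeg m g' v"
  unfolding gdeg_def by (auto intro!: sum.cong)

lemma eulerian_pseudo_path_cong:
  "(\<And>i. i < n \<Longrightarrow> g i = g' i) \<Longrightarrow>
    eulerian_pseudo_path V n g e x \<longleftrightarrow> eulerian_pseudo_path V n g' e x"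
  unfolding eulerian_pseudo_path_def by (simp cong: gdeg_cong)

lemma gdeg_Suc:
  "gdeg (Suc n) g v = gdeg n g v + (if fst (g n) = v then 1 else 0) + (if snd (g n) = v then 1 else 0)"
  unfolding gdeg_def by simp

lemma eulerian_pseudo_path_iff_parity:
  assumes "e \<in> V" "x \<in> V"
  shows "eulerian_pseudo_path V n g e x \<longleftrightarrow>
    (\<forall>w\<in>V. even (gdeg n g w + (if e = w then 1 else 0) + (if x = w then 1 else 0)))"
proof
  assume "eulerian_pseudo_path V n g e x"
  then show "\<forall>w\<in>V. even (gdeg n g w + (if e = w then 1 else 0) + (if x = w then 1 else 0))"
    unfolding eulerian_pseudo_path_def by (cases "x = e") auto
next
  assume parity: "\<forall>w\<in>V. even (gdeg n g w + (if e = w then 1 else 0) + (if x = w then 1 else 0))"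
  have "even (gdeg n g w)" if "w \<in> V" "w \<noteq> e" "w \<noteq> x" for w
    using parity that by force
  moreover have "even (gdeg n g e)" if "x = e"
    using parity assms that by force
  moreover have "odd (gdeg n g e) \<and> odd (gdeg n g x)" if "x \<noteq> e"
    using parity assms that by force
  ultimately show "eulerian_pseudo_path V n g e x"
    unfolding eulerian_pseudo_path_def by blast
qed

lemma balanced_Suc_iff_eulerian_pseudo_path:
  assumes "h n \<in> V \<times> V"
  shows "balanced V (Suc n) h \<longleftrightarrow> eulerian_pseudo_path V n h (fst (h n)) (snd (h n))"
  using assms by (simp add: balanced_def gdeg_Suc eulerian_pseudo_path_iff_parity mem_Times_iff)

lemma eulerian_pseudo_path_endpoint_unique:
  assumes "eulerian_pseudo_path V n g e x" "eulerian_pseudo_path V n g e y" "x \<in> V" "y \<in> V"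
  shows "x = y"
  using assms unfolding eulerian_pseudo_path_def by metis

lemma card_balanced_graphs_last_edge_from:
  assumes "e \<in> V"
  shows "card {h \<in> labeled_graphs V (Suc n). balanced V (Suc n) h \<and> fst (h n) = e}
       = card {g \<in> labeled_graphs V n. \<exists>x\<in>V. eulerian_pseudo_path V n g e x}"
    (is "card ?F = card ?\<Gamma>")
proof (rule bij_betw_same_card)
  have last_edge: "snd (h n) \<in> V" if "h \<in> ?F" for h
    using that unfolding labeled_graphs_iff by auto
  have path: "eulerian_pseudo_path V n h e (snd (h n))" if h: "h \<in> ?F" for h
  proof -
    from h have "h n \<in> V \<times> V" "balanced V (Suc n) h" "fst (h n) = e"
      unfolding labeled_graphs_iff by auto
    then show ?thesis
      using balanced_Suc_iff_eulerian_pseudo_path [of h n V] by simp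
  qed
  have "inj_on (\<lambda>h. restrict h {0..<n}) ?F"
  proof (rule inj_onI)
    fix h h' assume h: "h \<in> ?F" and h': "h' \<in> ?F"
      and eq: "restrict h {0..<n} = restrict h' {0..<n}"
    have below: "h i = h' i" if "i < n" for i
      using fun_cong [OF eq, of i] that by simp
    have "eulerian_pseudo_path V n h' e (snd (h n))"
      using eulerian_pseudo_path_cong [of n h h', OF below] path [OF h] by blast
    then have "snd (h n) = snd (h' n)"
      by (rule eulerian_pseudo_path_endpoint_unique [OF _ path [OF h'] last_edge [OF h] last_edge [OF h']])
    with h h' have "h n = h' n"
      by (simp add: prod_eq_iff)
    show "h = h'"
    proof
      fix i
      consider "i < n" | "i = n" | "Suc n \<le> i" by linarith
      then show "h i = h' i"
        using below \<open>h n = h' n\<close> h h' unfolding labeled_graphs_iff by cases auto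
    qed
  qed
  moreover have "(\<lambda>h. restrict h {0..<n}) ` ?F = ?\<Gamma>"
  proof
    show "(\<lambda>h. restrict h {0..<n}) ` ?F \<subseteq> ?\<Gamma>"
    proof
      fix g assume "g \<in> (\<lambda>h. restrict h {0..<n}) ` ?F"
      then obtain h where h: "h \<in> ?F" and g: "g = restrict h {0..<n}" by blast
      have "eulerian_pseudo_path V n g e (snd (h n))"
        unfolding g using eulerian_pseudo_path_cong [of n "restrict h {0..<n}" h] path [OF h] by simp
      with h g last_edge [OF h] restrict_labeled_graph show "g \<in> ?\<Gamma>"
        by blast
    qed
    show "?\<Gamma> \<subseteq> (\<lambda>h. restrict h {0..<n}) ` ?F"
    proof
      fix g assume "g \<in> ?\<Gamma>"
      then obtain x where g: "g \<in> labeled_graphs V n" and x: "x \<in> V"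
        and path_g: "eulerian_pseudo_path V n g e x" by blast
      let ?h = "g(n := (e, x))"
      have last: "?h n \<in> V \<times> V"
        using assms x by simp
      have "eulerian_pseudo_path V n ?h e x"
        using eulerian_pseudo_path_cong [of n ?h g] path_g by simp
      then have "balanced V (Suc n) ?h"
        using balanced_Suc_iff_eulerian_pseudo_path [of ?h n V, OF last] by simp
      then have "?h \<in> ?F"
        using extend_labeled_graph [OF g last] by simp
      moreover have "g = restrict ?h {0..<n}"
        using g unfolding labeled_graphs_iff by (auto simp: restrict_def)
      ultimately show "g \<in> (\<lambda>h. restrict h {0..<n}) ` ?F"
        by blast
    qed
  qed
  ultimately show "bij_betw (\<lambda>h. restrict h {0..<n}) ?F ?\<Gamma>"
    unfolding bij_betw_def ..
qed

definition translate_graph :: "('a, 'b) monoid_scheme \<Rightarrow> 'a \<Rightarrow> nat \<Rightarrow> (nat \<Rightarrow> 'a \<times> 'a) \<Rightarrow> nat \<Rightarrow> 'a \<times> 'a" where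
  "translate_graph G a m g = (\<lambda>i\<in>{0..<m}. (a \<otimes>\<^bsub>G\<^esub> fst (g i), a \<otimes>\<^bsub>G\<^esub> snd (g i)))"

context group
begin

lemma translate_graph_labeled:
  "a \<in> carrier G \<Longrightarrow> g \<in> labeled_graphs (carrier G) m \<Longrightarrow>
    translate_graph G a m g \<in> labeled_graphs (carrier G) m"
  unfolding labeled_graphs_iff translate_graph_def by (auto simp: mem_Times_iff)

lemma translate_graph_mult:
  assumes "a \<in> carrier G" "b \<in> carrier G" "g \<in> labeled_graphs (carrier G) m"
  shows "translate_graph G a m (translate_graph G b m g) = translate_graph G (a \<otimes> b) m g"
  using assms unfolding labeled_graphs_iff translate_graph_def
  by (auto simp: mem_Times_iff m_assoc)

lemma translate_graph_one:
  "g \<in> labeled_graphs (carrier G) m \<Longrightarrow> translate_graph G \<one> m g = g"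
  unfolding labeled_graphs_iff translate_graph_def by (auto simp: mem_Times_iff)

lemma gdeg_translate_graph:
  assumes "a \<in> carrier G" "g \<in> labeled_graphs (carrier G) m" "v \<in> carrier G"
  shows "gdeg m (translate_graph G a m g) (a \<otimes> v) = gdeg m g v"
  unfolding gdeg_def
proof (rule sum.cong)
  fix i assume "i \<in> {..<m}"
  with assms show "(if fst (translate_graph G a m g i) = a \<otimes> v then 1 else 0) +
      (if snd (translate_graph G a m g i) = a \<otimes> v then 1 else 0) =
      (if fst (g i) = v then 1 else 0) + (if snd (g i) = v then 1 else 0)"
    unfolding labeled_graphs_iff translate_graph_def by (auto simp: mem_Times_iff)
qed simp

lemma balanced_translate_graph:
  assumes a: "a \<in> carrier G" and g: "g \<in> labeled_graphs (carrier G) m"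
  shows "balanced (carrier G) m (translate_graph G a m g) \<longleftrightarrow> balanced (carrier G) m g"
proof -
  have "v = a \<otimes> (inv a \<otimes> v)" if "v \<in> carrier G" for v
    using a that by (simp add: m_assoc [symmetric])
  then show ?thesis
    using a g unfolding balanced_def by (metis gdeg_translate_graph inv_closed m_closed)
qed

lemma card_balanced_graphs_Suc:
  "card {h \<in> labeled_graphs (carrier G) (Suc n). balanced (carrier G) (Suc n) h}
   = card (carrier G) * card {h \<in> labeled_graphs (carrier G) (Suc n).
                                balanced (carrier G) (Suc n) h \<and> fst (h n) = \<one>}"
    (is "card ?B = card (carrier G) * card ?F")
proof -
  let ?t = "\<lambda>(a, h). translate_graph G a (Suc n) h"
  let ?t' = "\<lambda>h. (fst (h n), translate_graph G (inv fst (h n)) (Suc n) h)"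
  have first_vertex: "fst (h n) \<in> carrier G" if "h \<in> labeled_graphs (carrier G) (Suc n)" for h
    using that unfolding labeled_graphs_iff by (auto simp: mem_Times_iff)
  have fst_translate: "fst (translate_graph G a (Suc n) h n) = a \<otimes> fst (h n)" for a h
    unfolding translate_graph_def by simp
  have "bij_betw ?t (carrier G \<times> ?F) ?B"
  proof (rule bij_betw_byWitness [where f' = ?t'])
    show "\<forall>p\<in>carrier G \<times> ?F. ?t' (?t p) = p"
    proof
      fix p assume "p \<in> carrier G \<times> ?F"
      then obtain a h where "p = (a, h)" "a \<in> carrier G" "h \<in> ?F" by blast
      then show "?t' (?t p) = p"
        by (simp add: fst_translate translate_graph_mult translate_graph_one)
    qed
    show "\<forall>h\<in>?B. ?t (?t' h) = h"
      using first_vertex by (simp add: translate_graph_mult translate_graph_one)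
    show "?t ` (carrier G \<times> ?F) \<subseteq> ?B"
      by (auto simp: translate_graph_labeled balanced_translate_graph)
    show "?t' ` ?B \<subseteq> carrier G \<times> ?F"
      using first_vertex
      by (auto simp: fst_translate translate_graph_labeled balanced_translate_graph)
  qed
  then have "card (carrier G \<times> ?F) = card ?B"
    by (rule bij_betw_same_card)
  then show ?thesis
    by (simp add: card_cartesian_product)
qed

end

theorem mainTheorem12:
  fixes G :: "('a, 'b) monoid_scheme" and k n :: nat
  assumes "group G" and "finite (carrier G)" and "card (carrier G) = k" and "k \<ge> 1"
  shows "real (gamma_count G n) = real (b_count G (n + 1)) / real k"
proof -
  interpret group G by fact
  have "b_count G (Suc n) = k * gamma_count G n"
    unfolding b_count_def gamma_count_def card_balanced_graphs_Suc assms(3)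
    using card_balanced_graphs_last_edge_from [OF one_closed] by simp
  with assms(4) show ?thesis by simp
qed

end
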